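(* Let $n\ge 3$ and $k\in\{1,\dots,n-1\}$, and let $\Phi^{(n,k)}:M_n\to M_n$ be the linear map $$\Phi^{(n,k)}([a_{ij}])=\operatorname{diag}(b_1,\dots,b_n)-[a_{ij}],\qquad b_i=(n-1)a_{ii}+a_{\sigma_k(i),\sigma_k(i)},$$ where $\sigma_k(i)\equiv i+k \pmod n$ with $\sigma_k(i)\in\{1,\dots,n\}$. If $\gcd(n,k)\neq 1$, then $\Phi^{(n,k)}$ is not an extremal positive linear map.
   Context: $M_n$ denotes the algebra of complex $n\times n$ matrices. A linear map $\phi:M_n\to M_n$ is positive if it maps positive semidefinite matrices to positive semidefinite matrices; $\Phi^{(n,k)}$ is known to be positive. A positive linear map $\phi$ is extremal if whenever $\phi=\phi_1+\phi_2$ with $\phi_1,\phi_2$ positive linear maps, there are nonnegative reals $\lambda_i$ with $\phi_i=\lambda_i\phi$. *)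

theory Defs
  imports "Jordan_Normal_Form.Matrix" "HOL-Library.Complex_Order"
begin

definition psd :: "nat \<Rightarrow> complex mat \<Rightarrow> bool" where
  "psd n A \<longleftrightarrow> A \<in> carrier_mat n n \<and>
     (\<forall>x :: nat \<Rightarrow> complex. 0 \<le> (\<Sum>i<n. \<Sum>j<n. cnj (x i) * A $$ (i, j) * x j))"

definition linear_map_Mn :: "nat \<Rightarrow> (complex mat \<Rightarrow> complex mat) \<Rightarrow> bool" where
  "linear_map_Mn n \<phi> \<longleftrightarrow>
     (\<forall>A \<in> carrier_mat n n. \<phi> A \<in> carrier_mat n n) \<and>
     (\<forall>A \<in> carrier_mat n n. \<forall>B \<in> carrier_mat n n. \<phi> (A + B) = \<phi> A + \<phi> B) \<and>
     (\<forall>A \<in> carrier_mat n n. \<forall>c :: complex. \<phi> (c \<cdot>\<^sub>m A) = c \<cdot>\<^sub>m \<phi> A)"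

definition positive_map :: "nat \<Rightarrow> (complex mat \<Rightarrow> complex mat) \<Rightarrow> bool" where
  "positive_map n \<phi> \<longleftrightarrow> linear_map_Mn n \<phi> \<and> (\<forall>A. psd n A \<longrightarrow> psd n (\<phi> A))"

definition extremal_positive_map :: "nat \<Rightarrow> (complex mat \<Rightarrow> complex mat) \<Rightarrow> bool" where
  "extremal_positive_map n \<phi> \<longleftrightarrow> positive_map n \<phi> \<and>
     (\<forall>\<phi>1 \<phi>2. positive_map n \<phi>1 \<and> positive_map n \<phi>2 \<and>
        (\<forall>A \<in> carrier_mat n n. \<phi> A = \<phi>1 A + \<phi>2 A) \<longrightarrow>
        (\<exists>l1 l2 :: real. l1 \<ge> 0 \<and> l2 \<ge> 0 \<and>
           (\<forall>A \<in> carrier_mat n n. \<phi>1 A = complex_of_real l1 \<cdot>\<^sub>m \<phi> A \<and>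
                                  \<phi>2 A = complex_of_real l2 \<cdot>\<^sub>m \<phi> A)))"

text \<open>Indices are 0-based: index i in {0..n-1} corresponds to i+1 in the paper, and
 sigma_k(i) = (i + k) mod n.\<close>

definition Phi :: "nat \<Rightarrow> nat \<Rightarrow> complex mat \<Rightarrow> complex mat" where
  "Phi n k A = mat n n (\<lambda>(i, j).
     (if i = j then of_nat (n - 1) * A $$ (i, i) + A $$ ((i + k) mod n, (i + k) mod n) else 0)
     - A $$ (i, j))"

end

theory Submission
  imports Defs "HOL-Analysis.Derivative"
begin

text \<open>Let \<open>d = gcd n k\<close>. The shift \<open>i \<mapsto> i + k\<close> permutes each residue class mod \<open>d\<close>,
  so \<open>Phi n k\<close> is the sum of its block-diagonal part with respect to these classes (carrying the
  diagonal terms \<open>(N - 1) a(i,i) + a(\<sigma> i, \<sigma> i)\<close>, \<open>N\<close> the class size) and the remainder.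
  Both parts are positive. The quadratic form of the remainder is half a sum of forms of \<open>A\<close> at
  two-point vectors. On a block, the Cauchy-Schwarz bound \<open>Re (x\<^sup>* A x) \<le> (\<Sum>i. |x i| \<surd>a(i,i))\<^sup>2\<close>,
  the inequality \<open>(\<Sum>i. u i)\<^sup>2 \<le> (N - 1) (\<Sum>i. (u i)\<^sup>2) + N (\<Prod>i. u i) powr (2 / N)\<close>
  (by induction, removing the least term) and AM-GM for the permuted diagonal give positivity.
  As \<open>d \<ge> 2\<close>, the block part vanishes on an entry where \<open>Phi n k\<close> does not and vice versa,
  so it is no multiple of \<open>Phi n k\<close>.\<close>

lemma Bernoulli_inequality_powr:
  fixes g a :: real
  assumes "0 < g" "1 \<le> a"
  shows "1 + a * (g - 1) \<le> g powr a"
proof -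
  have "a * 1 powr (a - 1) * (g - 1) \<le> g powr a - 1 powr a"
    using assms
    by (intro convex_on_imp_above_tangent[where A = "{0<..}"] powr_convex)
       (auto intro!: derivative_eq_intros simp: interior_open)
  then show ?thesis by simp
qed

lemma geom_mean_insert_lower_bound:
  fixes u0 G M :: real
  assumes u0: "0 < u0" and G: "u0 \<le> G" and M: "1 \<le> M"
  shows "2 * M * G * u0 - (M - 1) * u0\<^sup>2 \<le> (M + 1) * (u0 * G powr M) powr (2 / (M + 1))"
proof -
  define g where "g = G / u0"
  define a where "a = 2 * M / (M + 1)"
  have g: "1 \<le> g" and G_eq: "G = u0 * g"
    using u0 G by (auto simp: g_def)
  have a: "1 \<le> a" "(M + 1) * (2 / (M + 1)) = 2" "M * (2 / (M + 1)) = a"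
    using M by (simp_all add: a_def field_simps)
  have "u0 * G powr M = u0 powr (M + 1) * g powr M"
    using u0 g by (simp add: G_eq powr_mult powr_add)
  then have "(u0 * G powr M) powr (2 / (M + 1))
      = (u0 powr (M + 1)) powr (2 / (M + 1)) * (g powr M) powr (2 / (M + 1))"
    by (simp add: powr_mult)
  also have "\<dots> = u0\<^sup>2 * g powr a"
    using u0 by (simp only: powr_powr a(2,3)) simp
  finally have H: "(u0 * G powr M) powr (2 / (M + 1)) = u0\<^sup>2 * g powr a" .
  have "2 * M * G * u0 - (M - 1) * u0\<^sup>2 = (M + 1) * (u0\<^sup>2 * (1 + a * (g - 1)))"
    using M by (simp add: G_eq a_def field_simps power2_eq_square)
  also have "\<dots> \<le> (M + 1) * (u0\<^sup>2 * g powr a)"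
    using Bernoulli_inequality_powr[OF _ a(1), of g] g M
    by (intro mult_left_mono) auto
  finally show ?thesis unfolding H .
qed

lemma square_sum_diff_const_le:
  fixes u :: "'a \<Rightarrow> real" and c :: real
  shows "((\<Sum>i\<in>S. u i) - card S * c)\<^sup>2
    \<le> card S * ((\<Sum>i\<in>S. (u i)\<^sup>2) - 2 * c * (\<Sum>i\<in>S. u i) + card S * c\<^sup>2)"
proof -
  have "(\<Sum>i\<in>S. u i - c)\<^sup>2 \<le> (\<Sum>i\<in>S. (u i - c)\<^sup>2) * card S"
    by (rule sum_squared_le_sum_of_squares)
  moreover have "(\<Sum>i\<in>S. (u i - c)\<^sup>2) = (\<Sum>i\<in>S. (u i)\<^sup>2) - 2 * c * (\<Sum>i\<in>S. u i) + card S * c\<^sup>2"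
    by (simp add: power2_diff sum_subtractf sum.distrib sum_distrib_left sum_distrib_right algebra_simps)
  ultimately show ?thesis
    by (simp add: sum_subtractf mult.commute)
qed

lemma le_geom_mean:
  fixes u :: "'a \<Rightarrow> real"
  assumes "finite S" "S \<noteq> {}" "0 \<le> c" "\<And>i. i \<in> S \<Longrightarrow> c \<le> u i"
  shows "c \<le> (\<Prod>i\<in>S. u i) powr (1 / card S)"
proof -
  have "c ^ card S \<le> (\<Prod>i\<in>S. u i)"
    using assms prod_mono[of S "\<lambda>_. c" u] by simp
  then have "(c ^ card S) powr (1 / card S) \<le> (\<Prod>i\<in>S. u i) powr (1 / card S)"
    using assms(3) by (intro powr_mono2) auto
  moreover have "c ^ card S = c powr card S"
    using assms(1-3) by (simp add: powr_realpow')
  ultimately show ?thesis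
    using assms(1-3) by (simp add: powr_powr)
qed

text \<open>The inductive step of the next lemma: \<open>u0\<close> is the smallest term, and \<open>s\<close>, \<open>s2\<close>, \<open>P\<close>
  are the sum, the sum of squares and the product of the remaining \<open>M\<close> terms.\<close>

lemma square_sum_insert_bound:
  fixes u0 s s2 P M :: real
  assumes M: "1 \<le> M" and u0: "0 \<le> u0" "u0 \<le> P powr (1 / M)" and P: "0 \<le> P"
    and IH: "s\<^sup>2 \<le> (M - 1) * s2 + M * P powr (2 / M)"
    and CS: "(s - M * u0)\<^sup>2 \<le> M * (s2 - 2 * u0 * s + M * u0\<^sup>2)"
    and AM_GM: "M * P powr (1 / M) \<le> s"
  shows "(u0 + s)\<^sup>2 \<le> M * (u0\<^sup>2 + s2) + (M + 1) * (u0 * P) powr (2 / (M + 1))"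
proof (cases "u0 = 0")
  case True
  then show ?thesis using CS by simp
next
  case False
  define G where "G = P powr (1 / M)"
  have G_sq: "P powr (2 / M) = G\<^sup>2"
    unfolding G_def power2_eq_square by (simp flip: powr_add)
  have P_eq: "P = G powr M"
    unfolding G_def using P M by (simp add: powr_powr)
  have "M * (G - u0) \<le> s - M * u0" "0 \<le> M * (G - u0)"
    using AM_GM u0 M unfolding G_def by (auto simp: algebra_simps)
  then have "(M * (G - u0))\<^sup>2 \<le> (s - M * u0)\<^sup>2"
    by (rule power_mono)
  moreover have "(M * (G - u0))\<^sup>2 = M * (M * (G - u0)\<^sup>2)"
    by (simp add: power2_eq_square)
  ultimately have "M * (M * (G - u0)\<^sup>2) \<le> M * (s2 - 2 * u0 * s + M * u0\<^sup>2)"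
    using CS by linarith
  then have CS': "M * (G - u0)\<^sup>2 \<le> s2 - 2 * u0 * s + M * u0\<^sup>2"
    using M by simp
  have "u0 \<le> G"
    using u0(2) unfolding G_def .
  then have B: "2 * M * G * u0 - (M - 1) * u0\<^sup>2 \<le> (M + 1) * (u0 * P) powr (2 / (M + 1))"
    using geom_mean_insert_lower_bound[of u0 G M] u0(1) False M by (simp add: P_eq)
  have "(u0 + s)\<^sup>2 - (M * (u0\<^sup>2 + s2) + (M + 1) * (u0 * P) powr (2 / (M + 1)))
      = (s\<^sup>2 - ((M - 1) * s2 + M * G\<^sup>2)) + (M * (G - u0)\<^sup>2 - (s2 - 2 * u0 * s + M * u0\<^sup>2))
        + ((2 * M * G * u0 - (M - 1) * u0\<^sup>2) - (M + 1) * (u0 * P) powr (2 / (M + 1)))"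
    by (simp add: power2_eq_square algebra_simps)
  moreover have "s\<^sup>2 \<le> (M - 1) * s2 + M * G\<^sup>2"
    using IH G_sq by simp
  ultimately show ?thesis
    using CS' B by linarith
qed

lemma square_sum_le_sum_squares_geom_mean:
  fixes u :: "'a \<Rightarrow> real"
  assumes "finite S" "S \<noteq> {}" "\<And>i. i \<in> S \<Longrightarrow> 0 \<le> u i"
  shows "(\<Sum>i\<in>S. u i)\<^sup>2
    \<le> (real (card S) - 1) * (\<Sum>i\<in>S. (u i)\<^sup>2) + card S * (\<Prod>i\<in>S. u i) powr (2 / card S)"
proof -
  obtain N where "card S = Suc N"
    using assms by (metis card_0_eq not0_implies_Suc)
  then show ?thesis
    using assms
  proof (induction N arbitrary: S)
    case 0
    then obtain a where "S = {a}"
      by (metis card_1_singletonE One_nat_def)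
    then show ?case
      using "0.prems" by simp
  next
    case (Suc N S)
    have "Min (u ` S) \<in> u ` S"
      using Suc.prems by simp
    then obtain a where a: "a \<in> S" "u a = Min (u ` S)"
      by auto
    have a_min: "u a \<le> u i" if "i \<in> S" for i
      using a that Suc.prems(2) by simp
    have u_a: "0 \<le> u a"
      using a(1) Suc.prems(4) by simp
    define S' where "S' = S - {a}"
    define M where "M = real (card S')"
    define s where "s = (\<Sum>i\<in>S'. u i)"
    define s2 where "s2 = (\<Sum>i\<in>S'. (u i)\<^sup>2)"
    define P where "P = (\<Prod>i\<in>S'. u i)"
    have S': "finite S'" "card S' = Suc N" "\<And>i. i \<in> S' \<Longrightarrow> 0 \<le> u i"
      using Suc.prems a by (auto simp: S'_def)
    then have "S' \<noteq> {}"
      by auto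
    have M: "1 \<le> M" "real (card S) = M + 1"
      using S'(2) Suc.prems(1) by (simp_all add: M_def)
    have P: "0 \<le> P"
      unfolding P_def using S'(3) by (simp add: prod_nonneg)
    have IH: "s\<^sup>2 \<le> (M - 1) * s2 + M * P powr (2 / M)"
      using Suc.IH[OF S'(2,1) \<open>S' \<noteq> {}\<close> S'(3)] by (simp add: M_def s_def s2_def P_def)
    have CS: "(s - M * u a)\<^sup>2 \<le> M * (s2 - 2 * u a * s + M * (u a)\<^sup>2)"
      using square_sum_diff_const_le[of u S' "u a"] by (simp add: s_def s2_def M_def)
    have "P powr (1 / M) \<le> (\<Sum>i\<in>S'. u i / M)"
      using arith_geom_mean[OF S'(1) \<open>S' \<noteq> {}\<close> S'(3)] by (simp add: P_def M_def)
    then have AM_GM: "M * P powr (1 / M) \<le> s"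
      using M by (simp add: s_def sum_divide_distrib[symmetric] field_simps)
    have u_a_le: "u a \<le> P powr (1 / M)"
      using le_geom_mean[OF S'(1) \<open>S' \<noteq> {}\<close> u_a] a_min by (simp add: P_def M_def S'_def)
    have "(u a + s)\<^sup>2 \<le> M * ((u a)\<^sup>2 + s2) + (M + 1) * (u a * P) powr (2 / (M + 1))"
      using square_sum_insert_bound[OF M(1) u_a u_a_le P IH CS AM_GM] .
    moreover have "(\<Sum>i\<in>S. u i) = u a + s" "(\<Sum>i\<in>S. (u i)\<^sup>2) = (u a)\<^sup>2 + s2"
      "(\<Prod>i\<in>S. u i) = u a * P"
      using a Suc.prems(2) by (simp_all add: s_def s2_def P_def S'_def sum.remove prod.remove)
    ultimately show ?case
      using M by (simp add: algebra_simps)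
  qed
qed

lemma square_sum_sqrt_le_permuted:
  fixes c q :: "'a \<Rightarrow> real"
  assumes S: "finite S" and \<sigma>: "bij_betw \<sigma> S S"
    and c: "\<And>i. i \<in> S \<Longrightarrow> 0 \<le> c i" and q: "\<And>i. i \<in> S \<Longrightarrow> 0 \<le> q i"
  shows "(\<Sum>i\<in>S. sqrt (c i * q i))\<^sup>2
    \<le> (real (card S) - 1) * (\<Sum>i\<in>S. c i * q i) + (\<Sum>i\<in>S. c (\<sigma> i) * q i)"
proof (cases "S = {}")
  case False
  define u where "u i = sqrt (c i * q i)" for i
  have u: "0 \<le> u i" "(u i)\<^sup>2 = c i * q i" if "i \<in> S" for i
    using c q that by (simp_all add: u_def)
  have cq_\<sigma>: "0 \<le> c (\<sigma> i) * q i" if "i \<in> S" for i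
    using c q that bij_betwE[OF \<sigma>] by simp
  txt \<open>Since \<open>\<sigma>\<close> permutes \<open>S\<close>, AM-GM for the permuted products bounds the
    geometric-mean term of the previous lemma.\<close>
  have "(\<Prod>i\<in>S. c (\<sigma> i) * q i) = (\<Prod>i\<in>S. c (\<sigma> i)) * (\<Prod>i\<in>S. q i)"
    by (simp add: prod.distrib)
  also have "\<dots> = (\<Prod>i\<in>S. c i * q i)"
    by (simp add: prod.reindex_bij_betw[OF \<sigma>] prod.distrib)
  also have "\<dots> = (\<Prod>i\<in>S. (u i)\<^sup>2)"
    using u by simp
  also have "\<dots> = (\<Prod>i\<in>S. u i) powr 2"
    using u(1) by (simp add: prod_nonneg powr_numeral prod_power_distrib)
  finally have "(\<Prod>i\<in>S. c (\<sigma> i) * q i) powr (1 / card S) = (\<Prod>i\<in>S. u i) powr (2 / card S)"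
    by (simp add: powr_powr)
  moreover have "(\<Prod>i\<in>S. c (\<sigma> i) * q i) powr (1 / card S) \<le> (\<Sum>i\<in>S. c (\<sigma> i) * q i) / card S"
    using arith_geom_mean[OF S False, of "\<lambda>i. c (\<sigma> i) * q i"] cq_\<sigma>
    by (simp add: sum_divide_distrib)
  ultimately have "card S * (\<Prod>i\<in>S. u i) powr (2 / card S) \<le> (\<Sum>i\<in>S. c (\<sigma> i) * q i)"
    using S False by (simp add: field_simps card_gt_0_iff)
  then show ?thesis
    using square_sum_le_sum_squares_geom_mean[OF S False, of u] u by (simp add: u_def)
qed simp

lemma le_two_sqrt_if_quadratic_bound:
  fixes a b p :: real
  assumes a: "0 \<le> a" and b: "0 \<le> b" and bound: "\<And>t. 0 < t \<Longrightarrow> t * p \<le> a + t\<^sup>2 * b"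
  shows "p \<le> 2 * sqrt (a * b)"
proof (cases "0 < a \<and> 0 < b")
  case True
  define t where "t = sqrt (a / b)"
  have t: "0 < t" "t\<^sup>2 * b = a"
    using True by (simp_all add: t_def)
  have "sqrt (a * b) * t = sqrt (a * b * (a / b))"
    unfolding t_def by (rule real_sqrt_mult[symmetric])
  also have "a * b * (a / b) = a\<^sup>2"
    using True by (simp add: power2_eq_square)
  finally have "sqrt (a * b) * t = a"
    using True by simp
  then have "t * p \<le> t * (2 * sqrt (a * b))"
    using bound[OF t(1)] t(2) by (simp add: algebra_simps)
  then show ?thesis
    using t(1) by simp
next
  case False
  then have ab: "a * b = 0"
    using a b by auto
  have "p \<le> 0"
  proof (rule ccontr)
    assume "\<not> p \<le> 0"
    then have p: "0 < p" by simp
    show False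
    proof (cases "b = 0")
      case True
      then show False
        using bound[of "(a + 1) / p"] p a by simp
    next
      case False
      then have "a = 0" "0 < b"
        using ab b by auto
      then have "p * p / (2 * b) \<le> p * p / (4 * b)"
        using bound[of "p / (2 * b)"] p by (simp add: power2_eq_square field_simps)
      then show False
        using p \<open>0 < b\<close> by (simp add: field_simps)
    qed
  qed
  then show ?thesis
    by (simp add: ab)
qed

lemma cnj_mult_of_real_mult: "cnj z * complex_of_real c * z = complex_of_real (c * (cmod z)\<^sup>2)"
proof -
  have "cnj z * complex_of_real c * z = complex_of_real c * (z * cnj z)"
    by (simp add: algebra_simps)
  then show ?thesis
    by (simp add: complex_norm_square[symmetric])
qed

definition quad_form :: "nat \<Rightarrow> complex mat \<Rightarrow> (nat \<Rightarrow> complex) \<Rightarrow> complex" where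
  "quad_form n A x = (\<Sum>i<n. \<Sum>j<n. cnj (x i) * A $$ (i, j) * x j)"

lemma psd_iff_quad_form: "psd n A \<longleftrightarrow> A \<in> carrier_mat n n \<and> (\<forall>x. 0 \<le> quad_form n A x)"
  unfolding psd_def quad_form_def ..

lemma psd_quad_form_real:
  assumes "psd n A"
  shows "Im (quad_form n A x) = 0" "0 \<le> Re (quad_form n A x)"
  using assms by (auto simp: psd_iff_quad_form less_eq_complex_def)

lemma quad_form_supported:
  assumes "T \<subseteq> {..<n}" "\<And>l. l \<notin> T \<Longrightarrow> x l = 0"
  shows "quad_form n A x = (\<Sum>i\<in>T. \<Sum>j\<in>T. cnj (x i) * A $$ (i, j) * x j)"
proof -
  have "(\<Sum>j<n. cnj (x i) * A $$ (i, j) * x j) = (\<Sum>j\<in>T. cnj (x i) * A $$ (i, j) * x j)" for i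
    using assms by (intro sum.mono_neutral_right) auto
  then have "quad_form n A x = (\<Sum>i<n. \<Sum>j\<in>T. cnj (x i) * A $$ (i, j) * x j)"
    by (simp add: quad_form_def)
  also have "\<dots> = (\<Sum>i\<in>T. \<Sum>j\<in>T. cnj (x i) * A $$ (i, j) * x j)"
    using assms by (intro sum.mono_neutral_right) auto
  finally show ?thesis .
qed

lemma quad_form_unit_vector:
  assumes "i < n"
  shows "quad_form n A (\<lambda>l. if l = i then 1 else 0) = A $$ (i, i)"
  using assms by (subst quad_form_supported[of "{i}"]) auto

lemma quad_form_two_point:
  assumes "i < n" "j < n" "i \<noteq> j"
  shows "quad_form n A (\<lambda>l. if l = i then \<alpha> else if l = j then \<beta> else 0)
    = cnj \<alpha> * A $$ (i, i) * \<alpha> + cnj \<alpha> * A $$ (i, j) * \<beta> + cnj \<beta> * A $$ (j, i) * \<alpha>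
      + cnj \<beta> * A $$ (j, j) * \<beta>"
  using assms by (subst quad_form_supported[of "{i, j}"]) auto

lemma psd_diag_real:
  assumes "psd n A" "i < n"
  shows "A $$ (i, i) = complex_of_real (Re (A $$ (i, i)))" "0 \<le> Re (A $$ (i, i))"
  using psd_quad_form_real[OF assms(1), of "\<lambda>l. if l = i then 1 else 0"]
  by (simp_all add: quad_form_unit_vector[OF assms(2)] complex_eq_iff)

lemma psd_cross_term_le:
  assumes A: "psd n A" and ij: "i < n" "j < n" "i \<noteq> j"
  shows "Re (cnj (y i) * A $$ (i, j) * y j + cnj (y j) * A $$ (j, i) * y i)
    \<le> 2 * (cmod (y i) * sqrt (Re (A $$ (i, i)))) * (cmod (y j) * sqrt (Re (A $$ (j, j))))"
proof -
  define ci where "ci = Re (A $$ (i, i))"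
  define cj where "cj = Re (A $$ (j, j))"
  define P where "P = cnj (y i) * A $$ (i, j) * y j + cnj (y j) * A $$ (j, i) * y i"
  have ci: "A $$ (i, i) = complex_of_real ci" "0 \<le> ci"
    using psd_diag_real[OF A ij(1)] by (simp_all add: ci_def)
  have cj: "A $$ (j, j) = complex_of_real cj" "0 \<le> cj"
    using psd_diag_real[OF A ij(2)] by (simp_all add: cj_def)
  have "t * Re P \<le> ci * (cmod (y i))\<^sup>2 + t\<^sup>2 * (cj * (cmod (y j))\<^sup>2)" if "0 < t" for t
  proof -
    let ?x = "\<lambda>l. if l = i then y i else if l = j then - (complex_of_real t * y j) else 0"
    have "quad_form n A ?x = cnj (y i) * A $$ (i, i) * y i - complex_of_real t * P
        + complex_of_real (t\<^sup>2) * (cnj (y j) * A $$ (j, j) * y j)"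
      unfolding quad_form_two_point[OF ij] P_def by (simp add: algebra_simps power2_eq_square)
    then show ?thesis
      using psd_quad_form_real(2)[OF A, of ?x] by (simp add: ci cj cnj_mult_of_real_mult)
  qed
  then have "Re P \<le> 2 * sqrt (ci * (cmod (y i))\<^sup>2 * (cj * (cmod (y j))\<^sup>2))"
    using ci cj by (intro le_two_sqrt_if_quadratic_bound) auto
  also have "sqrt (ci * (cmod (y i))\<^sup>2 * (cj * (cmod (y j))\<^sup>2))
      = (cmod (y i) * sqrt ci) * (cmod (y j) * sqrt cj)"
    by (simp add: real_sqrt_mult)
  finally show ?thesis
    unfolding P_def ci_def cj_def by (simp add: mult.assoc)
qed

lemma psd_quad_form_le_square_sum:
  assumes A: "psd n A"
  shows "Re (quad_form n A x) \<le> (\<Sum>k<n. cmod (x k) * sqrt (Re (A $$ (k, k))))\<^sup>2"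
proof -
  define w where "w k = cmod (x k) * sqrt (Re (A $$ (k, k)))" for k
  define f where "f k l = cnj (x k) * A $$ (k, l) * x l" for k l
  have f_le: "Re (f k l + f l k) \<le> 2 * (w k * w l)" if "k < n" "l < n" for k l
  proof (cases "k = l")
    case True
    have "Re (f k k) = Re (A $$ (k, k)) * (cmod (x k))\<^sup>2"
      using psd_diag_real[OF A that(1)] unfolding f_def
      by (metis Re_complex_of_real cnj_mult_of_real_mult)
    moreover have "w k * w k = Re (A $$ (k, k)) * (cmod (x k))\<^sup>2"
      using psd_diag_real(2)[OF A that(1)] by (simp add: w_def power2_eq_square algebra_simps)
    ultimately show ?thesis
      using True by simp
  next
    case False
    then show ?thesis
      using psd_cross_term_le[OF A that False, of x] by (simp add: f_def w_def mult.assoc)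
  qed
  have "2 * Re (quad_form n A x) = Re (\<Sum>k<n. \<Sum>l<n. f k l) + Re (\<Sum>k<n. \<Sum>l<n. f l k)"
    unfolding quad_form_def f_def by (subst sum.swap[of _ "{..<n}"]) simp
  also have "\<dots> = (\<Sum>k<n. \<Sum>l<n. Re (f k l + f l k))"
    by (simp add: sum.distrib)
  also have "\<dots> \<le> (\<Sum>k<n. \<Sum>l<n. 2 * (w k * w l))"
    using f_le by (intro sum_mono) auto
  also have "\<dots> = 2 * (\<Sum>k<n. w k)\<^sup>2"
    by (simp add: power2_eq_square sum_product flip: sum_distrib_left)
  finally show ?thesis
    by (simp add: w_def)
qed

lemma quad_form_le_permuted_diagonal:
  assumes A: "psd n A" and S: "S \<subseteq> {..<n}" and \<sigma>: "bij_betw \<sigma> S S"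
  shows "quad_form n A (\<lambda>l. if l \<in> S then y l else 0)
    \<le> (\<Sum>i\<in>S. cnj (y i) * (of_nat (card S - 1) * A $$ (i, i) + A $$ (\<sigma> i, \<sigma> i)) * y i)"
proof -
  define c where "c i = Re (A $$ (i, i))" for i
  define q where "q i = (cmod (y i))\<^sup>2" for i
  have finite_S: "finite S"
    using S finite_subset by blast
  have c: "A $$ (i, i) = complex_of_real (c i)" "0 \<le> c i" if "i \<in> S" for i
    using psd_diag_real[OF A] S that by (auto simp: c_def)
  have c_\<sigma>: "A $$ (\<sigma> i, \<sigma> i) = complex_of_real (c (\<sigma> i))" if "i \<in> S" for i
    using c(1) bij_betwE[OF \<sigma>] that by blast
  have W: "of_nat (card S - 1) * A $$ (i, i) + A $$ (\<sigma> i, \<sigma> i)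
      = complex_of_real ((real (card S) - 1) * c i + c (\<sigma> i))" if "i \<in> S" for i
  proof -
    have "1 \<le> card S"
      using that finite_S by (metis One_nat_def Suc_leI card_gt_0_iff empty_iff)
    then show ?thesis
      using c(1)[OF that] c_\<sigma>[OF that] by (simp add: of_nat_diff)
  qed
  have "(\<Sum>i\<in>S. cnj (y i) * (of_nat (card S - 1) * A $$ (i, i) + A $$ (\<sigma> i, \<sigma> i)) * y i)
      = complex_of_real (\<Sum>i\<in>S. ((real (card S) - 1) * c i + c (\<sigma> i)) * q i)"
    unfolding of_real_sum by (intro sum.cong refl) (simp only: W cnj_mult_of_real_mult q_def)
  moreover have "Re (quad_form n A (\<lambda>l. if l \<in> S then y l else 0))
      \<le> (\<Sum>i\<in>S. ((real (card S) - 1) * c i + c (\<sigma> i)) * q i)"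
  proof -
    have "Re (quad_form n A (\<lambda>l. if l \<in> S then y l else 0))
        \<le> (\<Sum>l<n. cmod (if l \<in> S then y l else 0) * sqrt (c l))\<^sup>2"
      unfolding c_def by (rule psd_quad_form_le_square_sum[OF A])
    also have "(\<Sum>l<n. cmod (if l \<in> S then y l else 0) * sqrt (c l)) = (\<Sum>i\<in>S. cmod (y i) * sqrt (c i))"
      using S by (intro sum.mono_neutral_cong_right) auto
    also have "\<dots> = (\<Sum>i\<in>S. sqrt (c i * q i))"
      by (simp add: q_def real_sqrt_mult mult.commute)
    also have "(\<Sum>i\<in>S. sqrt (c i * q i))\<^sup>2
        \<le> (real (card S) - 1) * (\<Sum>i\<in>S. c i * q i) + (\<Sum>i\<in>S. c (\<sigma> i) * q i)"
      using c(2) by (intro square_sum_sqrt_le_permuted[OF finite_S \<sigma>]) (auto simp: q_def)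
    also have "\<dots> = (\<Sum>i\<in>S. ((real (card S) - 1) * c i + c (\<sigma> i)) * q i)"
      by (simp add: sum.distrib sum_distrib_left mult.assoc distrib_right)
    finally show ?thesis .
  qed
  ultimately show ?thesis
    using psd_quad_form_real(1)[OF A] by (simp only: less_eq_complex_def) simp
qed

definition fiber :: "nat \<Rightarrow> (nat \<Rightarrow> 'c) \<Rightarrow> 'c \<Rightarrow> nat set" where
  "fiber n p r = {l. l < n \<and> p l = r}"

text \<open>The fibers of \<open>p\<close> split the index set into diagonal blocks. On a block of size \<open>N\<close> that
  \<open>\<sigma>\<close> permutes, \<open>block_part\<close> acts like the map of the theorem with \<open>n\<close> replaced by \<open>N\<close>.\<close>

definition block_part :: "nat \<Rightarrow> (nat \<Rightarrow> nat) \<Rightarrow> (nat \<Rightarrow> 'c) \<Rightarrow> complex mat \<Rightarrow> complex mat" where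
  "block_part n \<sigma> p A = Matrix.mat n n (\<lambda>(i, j). if p i = p j then
     (if i = j then of_nat (card (fiber n p (p i)) - 1) * A $$ (i, i) + A $$ (\<sigma> i, \<sigma> i) else 0)
       - A $$ (i, j)
     else 0)"

definition off_block_part :: "nat \<Rightarrow> (nat \<Rightarrow> 'c) \<Rightarrow> complex mat \<Rightarrow> complex mat" where
  "off_block_part n p A = Matrix.mat n n (\<lambda>(i, j). if p i = p j then
     (if i = j then of_nat (card {l. l < n \<and> p l \<noteq> p i}) * A $$ (i, i) else 0)
     else - A $$ (i, j))"

lemma card_fiber_add_card_not_fiber:
  "card (fiber n p r) + card {l. l < n \<and> p l \<noteq> r} = n"
proof -
  have "fiber n p r \<union> {l. l < n \<and> p l \<noteq> r} = {..<n}" "fiber n p r \<inter> {l. l < n \<and> p l \<noteq> r} = {}"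
    by (auto simp: fiber_def)
  then show ?thesis
    by (metis card_Un_disjoint card_lessThan finite_Un finite_lessThan)
qed

lemma Phi_eq_block_part_add_off_block_part:
  "Phi n k A = block_part n (\<lambda>i. (i + k) mod n) p A + off_block_part n p A"
proof (rule eq_matI)
  fix i j
  assume "i < dim_row (block_part n (\<lambda>i. (i + k) mod n) p A + off_block_part n p A)"
    "j < dim_col (block_part n (\<lambda>i. (i + k) mod n) p A + off_block_part n p A)"
  then have ij: "i < n" "j < n"
    by (simp_all add: off_block_part_def)
  have "i \<in> fiber n p (p i)"
    using ij by (simp add: fiber_def)
  then have "0 < card (fiber n p (p i))"
    by (auto simp: fiber_def card_gt_0_iff)
  then have "n - 1 = (card (fiber n p (p i)) - 1) + card {l. l < n \<and> p l \<noteq> p i}"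
    using card_fiber_add_card_not_fiber[of n p "p i"] by linarith
  then show "Phi n k A $$ (i, j)
      = (block_part n (\<lambda>i. (i + k) mod n) p A + off_block_part n p A) $$ (i, j)"
    using ij by (auto simp: Phi_def block_part_def off_block_part_def algebra_simps)
qed (simp_all add: Phi_def block_part_def off_block_part_def)

lemma linear_map_Mn_block_part:
  assumes "\<And>i. i < n \<Longrightarrow> \<sigma> i < n"
  shows "linear_map_Mn n (block_part n \<sigma> p)"
  unfolding linear_map_Mn_def
  using assms by (auto simp: block_part_def ring_distribs)

lemma linear_map_Mn_off_block_part: "linear_map_Mn n (off_block_part n p)"
  unfolding linear_map_Mn_def
  by (auto simp: off_block_part_def ring_distribs)

lemma quad_form_off_block_part:
  "2 * quad_form n (off_block_part n p A) y = (\<Sum>i<n. \<Sum>j<n. if p i \<noteq> p j then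
     quad_form n A (\<lambda>l. if l = i then y i else if l = j then - y j else 0) else 0)"
proof -
  define D where "D i = cnj (y i) * A $$ (i, i) * y i" for i
  define E where "E i j = cnj (y i) * A $$ (i, j) * y j" for i j
  define F where "F i j = (if p i \<noteq> p j then D i - E i j else 0)" for i j
  have "cnj (y i) * off_block_part n p A $$ (i, j) * y j
      = (if j = i then of_nat (card {l. l < n \<and> p l \<noteq> p i}) * D i else 0)
        - (if p i \<noteq> p j then E i j else 0)" if "i < n" "j < n" for i j
    using that by (auto simp: off_block_part_def D_def E_def algebra_simps)
  then have "quad_form n (off_block_part n p A) y
      = (\<Sum>i<n. of_nat (card {l. l < n \<and> p l \<noteq> p i}) * D i - (\<Sum>j<n. if p i \<noteq> p j then E i j else 0))"
    unfolding quad_form_def by (simp add: sum_subtractf)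
  also have "\<dots> = (\<Sum>i<n. \<Sum>j<n. F i j)"
  proof (intro sum.cong refl)
    fix i
    have "(\<Sum>j<n. if p i \<noteq> p j then D i else 0) = of_nat (card {l. l < n \<and> p l \<noteq> p i}) * D i"
      by (simp add: sum.If_cases Int_def eq_commute)
    moreover have "F i j = (if p i \<noteq> p j then D i else 0) - (if p i \<noteq> p j then E i j else 0)" for j
      by (simp add: F_def)
    ultimately show "of_nat (card {l. l < n \<and> p l \<noteq> p i}) * D i
        - (\<Sum>j<n. if p i \<noteq> p j then E i j else 0) = (\<Sum>j<n. F i j)"
      by (simp add: sum_subtractf)
  qed
  finally have "2 * quad_form n (off_block_part n p A) y = (\<Sum>i<n. \<Sum>j<n. F i j) + (\<Sum>j<n. \<Sum>i<n. F i j)"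
    by (simp add: sum.swap[of F])
  also have "\<dots> = (\<Sum>i<n. \<Sum>j<n. F i j + F j i)"
    by (simp add: sum.distrib)
  also have "\<dots> = (\<Sum>i<n. \<Sum>j<n. if p i \<noteq> p j then
      quad_form n A (\<lambda>l. if l = i then y i else if l = j then - y j else 0) else 0)"
  proof (intro sum.cong refl)
    fix i j
    assume "i \<in> {..<n}" "j \<in> {..<n}"
    moreover have "i \<noteq> j" if "p i \<noteq> p j"
      using that by auto
    ultimately show "F i j + F j i = (if p i \<noteq> p j then
        quad_form n A (\<lambda>l. if l = i then y i else if l = j then - y j else 0) else 0)"
      by (auto simp: F_def D_def E_def quad_form_two_point)
  qed
  finally show ?thesis .
qed

lemma positive_map_off_block_part: "positive_map n (off_block_part n p)"
proof -
  have "0 \<le> quad_form n (off_block_part n p A) y" if "psd n A" for A y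
  proof -
    have "0 \<le> 2 * quad_form n (off_block_part n p A) y"
      unfolding quad_form_off_block_part
      using that by (intro sum_nonneg) (auto simp: psd_iff_quad_form)
    then show ?thesis
      by (simp add: less_eq_complex_def)
  qed
  then show ?thesis
    using linear_map_Mn_off_block_part
    by (auto simp: positive_map_def psd_iff_quad_form off_block_part_def)
qed

lemma quad_form_block_part:
  "quad_form n (block_part n \<sigma> p A) y = (\<Sum>r\<in>p ` {..<n}.
     (\<Sum>i\<in>fiber n p r. cnj (y i) * (of_nat (card (fiber n p r) - 1) * A $$ (i, i) + A $$ (\<sigma> i, \<sigma> i)) * y i)
     - quad_form n A (\<lambda>l. if l \<in> fiber n p r then y l else 0))"
proof -
  define W where "W i = of_nat (card (fiber n p (p i)) - 1) * A $$ (i, i) + A $$ (\<sigma> i, \<sigma> i)" for i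
  define E where "E i j = cnj (y i) * A $$ (i, j) * y j" for i j
  have entry: "cnj (y i) * block_part n \<sigma> p A $$ (i, j) * y j
      = (if j = i then cnj (y i) * W i * y i else 0) - (if p i = p j then E i j else 0)"
    if "i < n" "j < n" for i j
    using that by (auto simp: block_part_def W_def E_def algebra_simps)
  have W_fiber: "(\<Sum>i\<in>fiber n p r. cnj (y i) * W i * y i)
      = (\<Sum>i\<in>fiber n p r. cnj (y i) * (of_nat (card (fiber n p r) - 1) * A $$ (i, i) + A $$ (\<sigma> i, \<sigma> i)) * y i)"
    for r
    by (intro sum.cong refl) (simp add: W_def fiber_def)
  have "quad_form n (block_part n \<sigma> p A) y
      = (\<Sum>i<n. cnj (y i) * W i * y i) - (\<Sum>i<n. \<Sum>j<n. if p i = p j then E i j else 0)"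
    unfolding quad_form_def using entry by (simp add: sum_subtractf)
  also have "(\<Sum>i<n. cnj (y i) * W i * y i) = (\<Sum>r\<in>p ` {..<n}. \<Sum>i\<in>fiber n p r. cnj (y i) * W i * y i)"
    by (simp add: sum.image_gen[of "{..<n}" _ p] fiber_def)
  also have "(\<Sum>i<n. \<Sum>j<n. if p i = p j then E i j else 0)
      = (\<Sum>r\<in>p ` {..<n}. quad_form n A (\<lambda>l. if l \<in> fiber n p r then y l else 0))"
  proof -
    define g where "g r i j = (if r = p i then (if p i = p j then E i j else 0) else 0)" for r i j
    have "quad_form n A (\<lambda>l. if l \<in> fiber n p r then y l else 0) = (\<Sum>i<n. \<Sum>j<n. g r i j)" for r
      by (auto simp: quad_form_def E_def fiber_def g_def intro!: sum.cong)
    then have "(\<Sum>r\<in>p ` {..<n}. quad_form n A (\<lambda>l. if l \<in> fiber n p r then y l else 0))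
        = (\<Sum>r\<in>p ` {..<n}. \<Sum>i<n. \<Sum>j<n. g r i j)"
      by simp
    also have "\<dots> = (\<Sum>i<n. \<Sum>r\<in>p ` {..<n}. \<Sum>j<n. g r i j)"
      by (rule sum.swap)
    also have "\<dots> = (\<Sum>i<n. \<Sum>j<n. \<Sum>r\<in>p ` {..<n}. g r i j)"
      by (intro sum.cong refl sum.swap)
    also have "\<dots> = (\<Sum>i<n. \<Sum>j<n. if p i = p j then E i j else 0)"
      by (intro sum.cong refl) (simp add: g_def sum.delta)
    finally show ?thesis ..
  qed
  finally show ?thesis
    by (simp add: sum_subtractf W_fiber)
qed

lemma positive_map_block_part:
  assumes \<sigma>: "\<And>i. i < n \<Longrightarrow> \<sigma> i < n \<and> p (\<sigma> i) = p i" and inj: "inj_on \<sigma> {..<n}"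
  shows "positive_map n (block_part n \<sigma> p)"
proof -
  have bij: "bij_betw \<sigma> (fiber n p r) (fiber n p r)" for r
  proof -
    have "\<sigma> ` fiber n p r \<subseteq> fiber n p r"
      using \<sigma> by (auto simp: fiber_def)
    moreover have "inj_on \<sigma> (fiber n p r)"
      using inj by (rule inj_on_subset) (auto simp: fiber_def)
    ultimately show ?thesis
      using endo_inj_surj[of "fiber n p r" \<sigma>] by (simp add: bij_betw_def fiber_def)
  qed
  have "0 \<le> quad_form n (block_part n \<sigma> p A) y" if "psd n A" for A y
    unfolding quad_form_block_part
    using quad_form_le_permuted_diagonal[OF that _ bij]
    by (intro sum_nonneg) (auto simp: fiber_def)
  then show ?thesis
    using linear_map_Mn_block_part[of n \<sigma> p] \<sigma>
    by (auto simp: positive_map_def psd_iff_quad_form block_part_def)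
qed

lemma inj_on_add_mod: "inj_on (\<lambda>i. (i + k) mod n) {..<n :: nat}"
proof (rule inj_onI)
  fix i j :: nat
  assume "i \<in> {..<n}" "j \<in> {..<n}" and shifted: "(i + k) mod n = (j + k) mod n"
  have "i mod n = j mod n"
    using shifted nat_mod_eq_iff by auto
  then show "i = j"
    using \<open>i \<in> {..<n}\<close> \<open>j \<in> {..<n}\<close> by simp
qed

lemma extremal_positive_mapD:
  assumes "extremal_positive_map n \<phi>" "positive_map n \<phi>1" "positive_map n \<phi>2"
    and "\<And>A. A \<in> carrier_mat n n \<Longrightarrow> \<phi> A = \<phi>1 A + \<phi>2 A"
  obtains l :: real where "\<forall>A\<in>carrier_mat n n. \<phi>1 A = complex_of_real l \<cdot>\<^sub>m \<phi> A"
proof -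
  have "\<forall>A\<in>carrier_mat n n. \<phi> A = \<phi>1 A + \<phi>2 A"
    using assms(4) by blast
  then show ?thesis
    using assms(1-3) that unfolding extremal_positive_map_def by metis
qed

lemma positive_map_block_part_mod:
  assumes "0 < n" "d dvd n" "d dvd k"
  shows "positive_map n (block_part n (\<lambda>i. (i + k) mod n) (\<lambda>i. i mod d))"
proof (rule positive_map_block_part)
  obtain m where "k = d * m"
    using assms(3) by blast
  then show "(i + k) mod n < n \<and> (i + k) mod n mod d = i mod d" for i
    using assms(1) by (simp add: mod_mod_cancel[OF assms(2)])
qed (rule inj_on_add_mod)

text \<open>The test matrix has one entry coupling different residues mod \<open>d\<close> and one entry inside a
  residue class: the block part annihilates the first but not the second, unlike \<open>Phi n k\<close>.\<close>

lemma block_part_mod_neq_smult_Phi: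
  assumes "2 \<le> d" "d < n"
  obtains A where "A \<in> carrier_mat n n" "block_part n \<sigma> (\<lambda>i. i mod d) A \<noteq> c \<cdot>\<^sub>m Phi n k A"
proof
  define A where "A = Matrix.mat n n (\<lambda>(i, j). if i = 0 \<and> (j = 1 \<or> j = d) then 1 else (0 :: complex))"
  show "A \<in> carrier_mat n n"
    by (simp add: A_def)
  show "block_part n \<sigma> (\<lambda>i. i mod d) A \<noteq> c \<cdot>\<^sub>m Phi n k A"
  proof
    assume eq: "block_part n \<sigma> (\<lambda>i. i mod d) A = c \<cdot>\<^sub>m Phi n k A"
    have "block_part n \<sigma> (\<lambda>i. i mod d) A $$ (0, 1) = 0" "Phi n k A $$ (0, 1) = - 1"
      using assms by (simp_all add: block_part_def Phi_def A_def)
    then have "c = 0"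
      using arg_cong[OF eq, of "\<lambda>M. M $$ (0, 1)"] assms by (simp add: Phi_def)
    then have "block_part n \<sigma> (\<lambda>i. i mod d) A $$ (0, d) = 0"
      using eq assms by (simp add: Phi_def)
    moreover have "block_part n \<sigma> (\<lambda>i. i mod d) A $$ (0, d) = - 1"
      using assms by (simp add: block_part_def A_def)
    ultimately show False
      by simp
  qed
qed

theorem theorem2:
  fixes n k :: nat
  assumes "n \<ge> 3" and "1 \<le> k" and "k \<le> n - 1" and "gcd n k \<noteq> 1"
  shows "\<not> extremal_positive_map n (Phi n k)"
proof
  assume extremal: "extremal_positive_map n (Phi n k)"
  define d where "d = gcd n k"
  have d_dvd: "d dvd n" "d dvd k"
    by (simp_all add: d_def)
  then have "d \<le> k" "0 < d"
    using assms(2) by (auto intro: dvd_imp_le)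
  moreover have "d \<noteq> 1"
    using assms(4) by (simp add: d_def)
  ultimately have d: "2 \<le> d" "d < n"
    using assms(3) by auto
  have "positive_map n (block_part n (\<lambda>i. (i + k) mod n) (\<lambda>i. i mod d))"
    using d_dvd d(2) by (intro positive_map_block_part_mod) auto
  then obtain l where "\<forall>A\<in>carrier_mat n n.
      block_part n (\<lambda>i. (i + k) mod n) (\<lambda>i. i mod d) A = complex_of_real l \<cdot>\<^sub>m Phi n k A"
    using extremal_positive_mapD[OF extremal _ positive_map_off_block_part]
      Phi_eq_block_part_add_off_block_part by blast
  then show False
    using block_part_mod_neq_smult_Phi[OF d] by metis
qed

end
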